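(* Fix real numbers $\alpha,\beta,\gamma,\delta$ with $\alpha\ne0$. Let $\mathscr T$ be a graph-enriched Schröder tree on a finite linear order $\ell$ with $|\ell|\ge2$, with root $r$ and $g=\bigvee\mathscr T$. Suppose that for every internal vertex $w\neq r$, the graph $g_{\ell_w}$ is regular and either $\alpha\gamma>0$ or ($\gamma=0$ and $g_{\ell_w}$ is connected). Then $$\sigma(U(g))=\Big(\prod_{w\in\mathrm{Iv}(\mathscr T),\,w\ne r}\mu_{\delta N_{rw}}\big(\sigma(U(a_w,g_w))\big)\Big)\cdot\sigma(U(a_r,g_r)),$$ where $\mu_{\delta N_{rw}}(\sigma(U(a_w,g_w)))$ is obtained from $\sigma(U(a_w,g_w))$ by removing one occurrence of $q_w=(\alpha+\delta)\mathrm{reg}(g_{\ell_w})+\beta+\gamma|\ell_w|$ (when it occurs) and then adding $\delta N_{rw}$ to every remaining element.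
   Context: All graphs finite and simple. $U(g)=\alpha A(g)+\beta I+\gamma J+\delta D(g)$ ($A$ adjacency, $D$ diagonal degree matrix, $J$ all-ones). Spectra are multisets written multiplicatively (product = multiset union). Generalized composition: for a segmented partition $\pi=(\ell_1,\dots,\ell_k)$ of $\ell$ (nonempty consecutive segments whose concatenation is $\ell$), graphs $g_{\ell_j}$ on $\ell_j$ and a graph $h$ on $\pi$, $\bigvee_h(g_{\ell_1},\dots,g_{\ell_k})$ has vertex set $\ell$ and edges those of the $g_{\ell_j}$ plus all $\{x,y\}$, $x\in\ell_i,y\in\ell_j$, $\{\ell_i,\ell_j\}\in E(h)$. Graph-enriched Schröder tree on $\ell$: rooted plane tree with leaves the elements of $\ell$ left to right, each internal vertex having at least two children, with a graph $g_v$ on $\pi_v=(\ell_{v_1},\dots,\ell_{v_k})$ for each internal $v$ (children $v_1,\dots,v_k$ left to right, $\ell_u$ the leaves below $u$). $\bigvee$ of a leaf is the one-vertex graph and $\bigvee\mathscr T=\bigvee_{g_r}(\bigvee\mathscr T_{r_1},\dots,\bigvee\mathscr T_{r_k})$; $g_{\ell_u}=\bigvee\mathscr T_u$; $a_v=(g_{\ell_{v_1}},\dots,g_{\ell_{v_k}})$. For internal $v$ with $n_i=|\ell_{v_i}|$, $\rho_i=\mathrm{reg}(g_{\ell_{v_i}})$ and $N_i=\sum_{s:\{\ell_{v_s},\ell_{v_i}\}\in E(g_v)}n_s$, let $p_i=\alpha\rho_i+\beta+\gamma n_i+\delta(\rho_i+N_i)$; $U(a_v,g_v)$ is the $k\times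 k$ matrix with $(i,j)$ entry $\sqrt{n_in_j}\big(\alpha A(g_v)_{ij}+\gamma(1-\delta_{ij})\big)+\delta_{ij}p_i$ ($\delta_{ij}$ Kronecker delta, $A(g_v)$ indexed by $\pi_v$ in order). For non-root internal $w$ with parent $u$, $N_w=\sum_{x:\{\ell_x,\ell_w\}\in E(g_u)}|\ell_x|$, and $N_{rw}=N_{w_1}+\cdots+N_{w_m}$ along the path $r=w_0,w_1,\dots,w_m=w$. *)

theory Defs
  imports "Jordan_Normal_Form.Char_Poly" "HOL-Library.Multiset"
begin

definition adj :: "'a set set \<Rightarrow> 'a \<Rightarrow> 'a \<Rightarrow> bool" where
  "adj E x y \<longleftrightarrow> x \<noteq> y \<and> {x, y} \<in> E"

definition deg :: "'a set \<Rightarrow> 'a set set \<Rightarrow> 'a \<Rightarrow> nat" where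
  "deg V E x = card {y \<in> V. adj E x y}"

definition regular :: "'a set \<Rightarrow> 'a set set \<Rightarrow> bool" where
  "regular V E \<longleftrightarrow> (\<exists>d. \<forall>x\<in>V. deg V E x = d)"

text \<open>degree of a regular graph (on a nonempty vertex set)\<close>
definition reg :: "'a set \<Rightarrow> 'a set set \<Rightarrow> nat" where
  "reg V E = deg V E (SOME x. x \<in> V)"

definition connected_graph :: "'a set \<Rightarrow> 'a set set \<Rightarrow> bool" where
  "connected_graph V E \<longleftrightarrow> V \<noteq> {} \<and>
     (\<forall>x\<in>V. \<forall>y\<in>V. (x, y) \<in> {(a, b). a \<in> V \<and> b \<in> V \<and> adj E a b}\<^sup>*)"

definition spec :: "real mat \<Rightarrow> complex multiset" where
  "spec M = (THE S. char_poly (map_mat complex_of_real M) =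
                    prod_mset (image_mset (\<lambda>a. [:- a, 1:]) S))"

definition Umat :: "real \<Rightarrow> real \<Rightarrow> real \<Rightarrow> real \<Rightarrow> nat \<Rightarrow> nat set set \<Rightarrow> real mat" where
  "Umat \<alpha> \<beta> \<gamma> \<delta> n E = mat n n (\<lambda>(i, j).
      \<alpha> * (if adj E i j then 1 else 0) + \<beta> * (if i = j then 1 else 0) + \<gamma>
      + \<delta> * (if i = j then real (deg {0..<n} E i) else 0))"

text \<open>A node carries a graph on the positions {0..<k} of its k children
  (position i stands for the segment of leaves below the i-th child).\<close>
datatype stree = Leaf nat | Node "nat set set" "stree list"

fun leaves :: "stree \<Rightarrow> nat list" where
  "leaves (Leaf x) = [x]"
| "leaves (Node E ts) = concat (map leaves ts)"

fun wf_stree :: "stree \<Rightarrow> bool" where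
  "wf_stree (Leaf x) = True"
| "wf_stree (Node E ts) = (2 \<le> length ts \<and>
      E \<subseteq> {{i, j} | i j. i < length ts \<and> j < length ts \<and> i \<noteq> j} \<and>
      (\<forall>t\<in>set ts. wf_stree t))"

fun compose :: "stree \<Rightarrow> nat set set" where
  "compose (Leaf x) = {}"
| "compose (Node E ts) = (\<Union>t\<in>set ts. compose t) \<union>
      {{x, y} | x y i j. {i, j} \<in> E \<and> i < length ts \<and> j < length ts \<and>
                         x \<in> set (leaves (ts ! i)) \<and> y \<in> set (leaves (ts ! j))}"

text \<open>Vertices of the tree are addressed by paths (lists of child positions) from the root.\<close>
fun subtree :: "stree \<Rightarrow> nat list \<Rightarrow> stree option" where
  "subtree t [] = Some t"
| "subtree (Leaf x) (i # p) = None"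
| "subtree (Node E ts) (i # p) = (if i < length ts then subtree (ts ! i) p else None)"

definition is_internal :: "stree \<Rightarrow> bool" where
  "is_internal t \<longleftrightarrow> (case t of Node _ _ \<Rightarrow> True | Leaf _ \<Rightarrow> False)"

definition internal_vertices :: "stree \<Rightarrow> nat list set" where
  "internal_vertices T = {p. \<exists>t. subtree T p = Some t \<and> is_internal t}"

definition node_graph :: "stree \<Rightarrow> nat set set" where
  "node_graph t = (case t of Node E ts \<Rightarrow> E | Leaf _ \<Rightarrow> {})"

definition node_children :: "stree \<Rightarrow> stree list" where
  "node_children t = (case t of Node E ts \<Rightarrow> ts | Leaf _ \<Rightarrow> [])"

definition Nblock :: "nat set set \<Rightarrow> stree list \<Rightarrow> nat \<Rightarrow> nat" where
  "Nblock E ts i = (\<Sum>s\<in>{s. s < length ts \<and> adj E s i}. length (leaves (ts ! s)))"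

definition Npath :: "stree \<Rightarrow> nat list \<Rightarrow> nat" where
  "Npath T p = (\<Sum>j<length p.
      let u = the (subtree T (take j p)) in
      Nblock (node_graph u) (node_children u) (p ! j))"

definition Unode :: "real \<Rightarrow> real \<Rightarrow> real \<Rightarrow> real \<Rightarrow> stree \<Rightarrow> real mat" where
  "Unode \<alpha> \<beta> \<gamma> \<delta> t = (let E = node_graph t; ts = node_children t; k = length ts;
      n = (\<lambda>i. real (length (leaves (ts ! i))));
      \<rho> = (\<lambda>i. real (reg (set (leaves (ts ! i))) (compose (ts ! i))));
      p = (\<lambda>i. \<alpha> * \<rho> i + \<beta> + \<gamma> * n i + \<delta> * (\<rho> i + real (Nblock E ts i)))
    in mat k k (\<lambda>(i, j). sqrt (n i * n j) *
          (\<alpha> * (if adj E i j then 1 else 0) + \<gamma> * (if i = j then 0 else 1))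
        + (if i = j then p i else 0)))"

definition mu_shift :: "complex \<Rightarrow> complex \<Rightarrow> complex multiset \<Rightarrow> complex multiset" where
  "mu_shift q c S = image_mset (\<lambda>x. x + c) (S - {#q#})"

end

theory Submission
  imports Defs
begin

text \<open>Order the leaves from left to right. At an internal vertex \<open>t\<close> whose children have regular
  graphs, the leaves below each child form a consecutive block of indices of \<open>U(g\<^sub>t)\<close>. Rows of a
  block agree outside it (they only see whether two blocks are adjacent in \<open>g\<^sub>t\<close>) and have equal
  sums inside it (the child is regular). Adding the columns of a block to its first column and
  subtracting its first row from the others is a similarity that splits the characteristic
  polynomial into that of the quotient matrix, which is diagonally similar to \<open>U(a\<^sub>t, g\<^sub>t)\<close>, and
  those of the reduced blocks. The block of child \<open>i\<close> is \<open>U(g\<^sub>i) + \<delta>N\<^sub>i I\<close>, so its spectrum is that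
  of the child shifted by \<open>\<delta>N\<^sub>i\<close>, and the reduction removes exactly its row sum \<open>q\<^sub>i + \<delta>N\<^sub>i\<close>; as
  \<open>q\<^sub>i\<close> is an eigenvalue of \<open>U(a\<^sub>i, g\<^sub>i)\<close> (the all-ones vector of the quotient), induction over
  the tree yields the theorem, the shifts accumulating to \<open>\<delta>N\<^sub>r\<^sub>w\<close> along the paths.\<close>

section \<open>Characteristic polynomials of matrices with invariant blocks\<close>

lemma det_permute_rows_cols:
  assumes A: "A \<in> carrier_mat n n" and p: "p permutes {0..<n}"
  shows "det (mat n n (\<lambda>(i,j). A $$ (p i, p j))) = det (A :: 'a :: comm_ring_1 mat)"
proof -
  have pn: "\<And>i. i < n \<Longrightarrow> p i < n" using permutes_in_image[OF p] by auto
  define C where "C = mat n n (\<lambda>(i,j). A $$ (i, p j))"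
  have C: "C \<in> carrier_mat n n" and TA: "transpose_mat A \<in> carrier_mat n n"
    using A by (auto simp: C_def)
  have rows: "mat n n (\<lambda>(i,j). A $$ (p i, p j)) = mat n n (\<lambda>(i,j). C $$ (p i, j))"
    by (rule eq_matI) (auto simp: C_def pn)
  have "det C = det (transpose_mat C)" using det_transpose[OF C] by simp
  also have "transpose_mat C = mat n n (\<lambda>(i,j). transpose_mat A $$ (p i, j))"
    by (rule eq_matI) (use A in \<open>auto simp: C_def pn\<close>)
  finally have cols: "det C = det (mat n n (\<lambda>(i,j). transpose_mat A $$ (p i, j)))" .
  have "(of_int (sign p) * of_int (sign p) :: 'a) = 1" by (auto simp: sign_def)
  then show ?thesis
    unfolding rows det_permute_rows[OF C p] cols det_permute_rows[OF TA p] det_transpose[OF A]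
    by (simp add: mult.assoc[symmetric])
qed

lemma char_poly_permute_rows_cols:
  assumes A: "A \<in> carrier_mat n n" and p: "p permutes {0..<n}"
  shows "char_poly (mat n n (\<lambda>(i,j). A $$ (p i, p j))) = char_poly (A :: 'a :: comm_ring_1 mat)"
proof -
  have pn: "\<And>i. i < n \<Longrightarrow> p i < n" using permutes_in_image[OF p] by auto
  have inj: "\<And>i j. p i = p j \<longleftrightarrow> i = j" using permutes_inj[OF p] by (auto dest: injD)
  have "char_poly_matrix (mat n n (\<lambda>(i,j). A $$ (p i, p j))) =
     mat n n (\<lambda>(i,j). char_poly_matrix A $$ (p i, p j))"
    by (rule eq_matI) (use A in \<open>auto simp: char_poly_matrix_def pn inj\<close>)
  then show ?thesis unfolding char_poly_def
    by (simp add: det_permute_rows_cols[OF char_poly_matrix_closed[OF A] p])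
qed

lemma char_poly_four_block_lower_left_zero:
  assumes A1: "A1 \<in> carrier_mat n n" and A2: "A2 \<in> carrier_mat n m" and A4: "A4 \<in> carrier_mat m m"
  shows "char_poly (four_block_mat A1 A2 (0\<^sub>m m n) A4) = char_poly A1 * char_poly (A4 :: 'a :: idom mat)"
proof -
  let ?cm = "\<lambda>A. [:0, 1:] \<cdot>\<^sub>m 1\<^sub>m (dim_row A) + map_mat (\<lambda>a. [:- a:]) A"
  have "char_poly (four_block_mat A1 A2 (0\<^sub>m m n) A4) = det (?cm (four_block_mat A1 A2 (0\<^sub>m m n) A4))"
    unfolding char_poly_defs using A1 A4 by simp
  also have "?cm (four_block_mat A1 A2 (0\<^sub>m m n) A4) =
      four_block_mat (?cm A1) (map_mat (\<lambda>a. [:- a:]) A2) (0\<^sub>m m n) (?cm A4)"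
    by (rule eq_matI) (use A1 A2 A4 in \<open>auto simp: one_poly_def\<close>)
  also have "det \<dots> = det (?cm A1) * det (?cm A4)"
    by (rule det_four_block_mat_lower_left_zero) (use A1 A2 A4 in auto)
  finally show ?thesis unfolding char_poly_defs .
qed

lemma similar_mat_diagonal_scaling:
  fixes A B :: "'a :: field mat"
  assumes A: "A \<in> carrier_mat k k" and B: "B \<in> carrier_mat k k" and d: "\<And>i. i < k \<Longrightarrow> d i \<noteq> 0"
    and BA: "\<And>i j. i < k \<Longrightarrow> j < k \<Longrightarrow> B $$ (i,j) = d i * A $$ (i,j) / d j"
  shows "similar_mat B A"
proof -
  let ?D = "mat_diag k d" and ?D' = "mat_diag k (\<lambda>i. inverse (d i))"
  have "mat_diag k (\<lambda>i. d i * inverse (d i)) = 1\<^sub>m k" "mat_diag k (\<lambda>i. inverse (d i) * d i) = 1\<^sub>m k"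
    by (auto intro!: eq_matI simp: mat_diag_def d)
  then have DD': "?D * ?D' = 1\<^sub>m k" and D'D: "?D' * ?D = 1\<^sub>m k" by simp_all
  have "?D * A * ?D' = mat k k (\<lambda>(i,j). d i * A $$ (i,j) * inverse (d j))"
    unfolding mat_diag_mult_left[OF A] by (subst mat_diag_mult_right) auto
  also have "\<dots> = B"
    by (rule eq_matI) (use B in \<open>auto simp: BA divide_inverse\<close>)
  finally show ?thesis by (intro similar_matI[OF _ DD' D'D]) (use A B in auto)
qed

definition skip_interval :: "nat \<Rightarrow> nat \<Rightarrow> nat \<Rightarrow> nat" where
  "skip_interval a d i = (if i < a then i else i + d)"

definition principal_block :: "'a mat \<Rightarrow> nat \<Rightarrow> nat \<Rightarrow> 'a mat" where
  "principal_block A a d = mat d d (\<lambda>(i,j). A $$ (a + i, a + j))"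

definition remove_interval :: "'a mat \<Rightarrow> nat \<Rightarrow> nat \<Rightarrow> 'a mat" where
  "remove_interval A a d = mat (dim_row A - d) (dim_row A - d)
     (\<lambda>(i,j). A $$ (skip_interval a d i, skip_interval a d j))"

text \<open>Moving the interval to the end makes the matrix block upper triangular.\<close>
lemma char_poly_invariant_interval:
  assumes A: "A \<in> carrier_mat n n" and ad: "a + d \<le> n"
    and zero: "\<And>i j. a \<le> i \<Longrightarrow> i < a + d \<Longrightarrow> j < n \<Longrightarrow> j < a \<or> a + d \<le> j \<Longrightarrow> A $$ (i,j) = 0"
  shows "char_poly A = char_poly (remove_interval A a d) * char_poly (principal_block (A :: 'a :: idom mat) a d)"
proof -
  define m where "m = n - d"
  define \<pi> where "\<pi> i = (if i < a then i else if i < m then i + d else if i < n then i - m + a else i)" for i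
  define \<psi> where "\<psi> j = (if j < a then j else if j < a + d then j - a + m else if j < n then j - d else j)" for j
  have "bij_betw \<pi> {0..<n} {0..<n}"
    by (rule bij_betw_byWitness[of _ \<psi>]) (use ad in \<open>auto simp: \<pi>_def \<psi>_def m_def\<close>)
  then have perm: "\<pi> permutes {0..<n}"
    by (rule bij_imp_permutes) (auto simp: \<pi>_def m_def)
  define A1 where "A1 = remove_interval A a d"
  define A2 where "A2 = mat m d (\<lambda>(i,j). A $$ (skip_interval a d i, a + j))"
  define A4 where "A4 = principal_block A a d"
  have A1: "A1 \<in> carrier_mat m m" using A by (simp add: A1_def remove_interval_def m_def)
  have "mat n n (\<lambda>(i,j). A $$ (\<pi> i, \<pi> j)) = four_block_mat A1 A2 (0\<^sub>m d m) A4"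
  proof (rule eq_matI)
    fix i j assume "i < dim_row (four_block_mat A1 A2 (0\<^sub>m d m) A4)"
      "j < dim_col (four_block_mat A1 A2 (0\<^sub>m d m) A4)"
    then have i: "i < n" and j: "j < n" using A1 ad by (auto simp: A4_def principal_block_def m_def)
    show "mat n n (\<lambda>(i,j). A $$ (\<pi> i, \<pi> j)) $$ (i, j) = four_block_mat A1 A2 (0\<^sub>m d m) A4 $$ (i, j)"
      using i j ad A by (cases "i < m")
        (auto simp: A1_def A2_def A4_def \<pi>_def m_def principal_block_def remove_interval_def
          skip_interval_def ac_simps intro!: zero)
  qed (use A1 ad in \<open>auto simp: A4_def principal_block_def m_def\<close>)
  then have "char_poly A = char_poly (four_block_mat A1 A2 (0\<^sub>m d m) A4)"
    using char_poly_permute_rows_cols[OF A perm] by simp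
  also have "\<dots> = char_poly A1 * char_poly A4"
    by (rule char_poly_four_block_lower_left_zero[OF A1]) (auto simp: A2_def A4_def principal_block_def)
  finally show ?thesis unfolding A1_def A4_def .
qed

definition block_shear :: "nat \<Rightarrow> nat \<Rightarrow> nat \<Rightarrow> 'a :: comm_ring_1 \<Rightarrow> 'a mat" where
  "block_shear n s p c =
     mat n n (\<lambda>(i,j). if i = j then 1 else if j = s \<and> s < i \<and> i < s + p then c else 0)"

lemma sum_delta_two:
  assumes "i < n" "s < (n::nat)"
  shows "(\<Sum>k = 0..<n. ((if k = i then 1 else 0) + (if k = s then c else 0)) * f k) = f i + c * (f s :: 'a :: comm_ring_1)"
proof -
  have "(\<Sum>k = 0..<n. ((if k = i then 1 else 0) + (if k = s then c else 0)) * f k)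
     = (\<Sum>k = 0..<n. (if k = i then f k else 0) + (if k = s then c * f k else 0))"
    by (rule sum.cong) (auto simp: algebra_simps)
  then show ?thesis using assms by (simp add: sum.distrib)
qed

lemma block_shear_mult_index:
  assumes Y: "Y \<in> carrier_mat n m" and i: "i < n" and j: "j < m" and s: "s < n"
  shows "(block_shear n s p c * Y) $$ (i,j) = Y $$ (i,j) + (if s < i \<and> i < s + p then c * Y $$ (s,j) else 0)"
proof -
  have "\<And>k. k < n \<Longrightarrow> block_shear n s p c $$ (i,k) =
      (if k = i then 1 else 0) + (if k = s then (if s < i \<and> i < s + p then c else 0) else 0)"
    using i by (auto simp: block_shear_def)
  then have "(block_shear n s p c * Y) $$ (i,j) = (\<Sum>k = 0..<n.
      ((if k = i then 1 else 0) + (if k = s then (if s < i \<and> i < s + p then c else 0) else 0)) * Y $$ (k,j))"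
    using i j Y by (simp add: scalar_prod_def block_shear_def)
  also have "\<dots> = Y $$ (i,j) + (if s < i \<and> i < s + p then c else 0) * Y $$ (s,j)"
    by (rule sum_delta_two[OF i s])
  finally show ?thesis by simp
qed

lemma block_shear_mult:
  assumes "s < n"
  shows "block_shear n s p a * block_shear n s p b = block_shear n s p (a + b)"
proof (rule eq_matI)
  fix i j assume "i < dim_row (block_shear n s p (a + b))" "j < dim_col (block_shear n s p (a + b))"
  then have i: "i < n" and j: "j < n" by (auto simp: block_shear_def)
  have "block_shear n s p b $$ (s,j) = (if s = j then 1 else 0)" "block_shear n s p b \<in> carrier_mat n n"
    using assms j by (auto simp: block_shear_def)
  then show "(block_shear n s p a * block_shear n s p b) $$ (i,j) = block_shear n s p (a + b) $$ (i,j)"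
    using i j assms by (simp add: block_shear_mult_index) (auto simp: block_shear_def)
qed (auto simp: block_shear_def)

lemma block_shear_zero: "block_shear n s p 0 = 1\<^sub>m n"
  by (rule eq_matI) (auto simp: block_shear_def)

lemma mult_block_shear_one_index:
  assumes M: "M \<in> carrier_mat m n" and i: "i < m" and j: "j < n" and sp: "s + p \<le> n" "1 \<le> p"
  shows "(M * block_shear n s p 1) $$ (i,j) =
    (if j = s then \<Sum>y\<in>{s..<s + p}. M $$ (i,y) else M $$ (i,j))"
proof -
  define J where "J = (if j = s then {s..<s + p} else {j})"
  have col: "\<And>k. k < n \<Longrightarrow> block_shear n s p 1 $$ (k,j) = (if k \<in> J then 1 else 0)"
    using j sp by (auto simp: block_shear_def J_def)
  have "(M * block_shear n s p 1) $$ (i,j) = (\<Sum>k = 0..<n. M $$ (i,k) * block_shear n s p 1 $$ (k,j))"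
    using i j M by (simp add: scalar_prod_def block_shear_def)
  also have "\<dots> = (\<Sum>k = 0..<n. if k \<in> J then M $$ (i,k) else 0)"
    by (rule sum.cong) (auto simp: col)
  also have "\<dots> = sum (\<lambda>k. M $$ (i,k)) ({0..<n} \<inter> J)" by (simp add: sum.inter_restrict)
  also have "{0..<n} \<inter> J = J" using j sp by (auto simp: J_def)
  finally show ?thesis by (simp add: J_def)
qed

definition collapse_cols :: "nat \<Rightarrow> nat \<Rightarrow> nat \<Rightarrow> nat set" where
  "collapse_cols s p j = (if j = s then {s..<s + p} else {skip_interval (s + 1) (p - 1) j})"

text \<open>The block \<open>[s, s + p)\<close> shrunk to the single index \<open>s\<close>; its columns are added up.\<close>
definition collapse_block :: "'a :: comm_ring_1 mat \<Rightarrow> nat \<Rightarrow> nat \<Rightarrow> 'a mat" where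
  "collapse_block M s p = mat (dim_row M - (p - 1)) (dim_row M - (p - 1))
     (\<lambda>(i,j). \<Sum>y\<in>collapse_cols s p j. M $$ (skip_interval (s + 1) (p - 1) i, y))"

definition reduced_block :: "'a :: comm_ring_1 mat \<Rightarrow> nat \<Rightarrow> nat \<Rightarrow> 'a mat" where
  "reduced_block M s p = mat (p - 1) (p - 1) (\<lambda>(i,j). M $$ (s + 1 + i, s + 1 + j) - M $$ (s, s + 1 + j))"

lemma reduced_block_carrier: "reduced_block M s p \<in> carrier_mat (p - 1) (p - 1)"
  by (simp add: reduced_block_def)

lemma reduced_block_principal_block [simp]:
  "reduced_block (principal_block M s p) 0 p = reduced_block M s p"
  by (rule eq_matI) (auto simp: reduced_block_def principal_block_def add.assoc)

text \<open>Adding the columns of the block to its first column and subtracting the first row of the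
  block from the others is a similarity; afterwards the rows \<open>s + 1, \<dots>, s + p - 1\<close> vanish
  outside the block.\<close>
lemma char_poly_collapse_block:
  fixes M :: "'a :: idom mat"
  assumes M: "M \<in> carrier_mat n n" and sp: "s + p \<le> n" "1 \<le> p"
    and outside: "\<And>x j. s \<le> x \<Longrightarrow> x < s + p \<Longrightarrow> j < n \<Longrightarrow> j < s \<or> s + p \<le> j \<Longrightarrow> M $$ (x,j) = M $$ (s,j)"
    and inside: "\<And>x. s \<le> x \<Longrightarrow> x < s + p \<Longrightarrow>
      (\<Sum>y\<in>{s..<s + p}. M $$ (x,y)) = (\<Sum>y\<in>{s..<s + p}. M $$ (s,y))"
  shows "char_poly M = char_poly (collapse_block M s p) * char_poly (reduced_block M s p)"
proof -
  let ?P = "block_shear n s p (1::'a)" and ?Q = "block_shear n s p (- 1::'a)"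
  define Y where "Y = M * ?P"
  define N where "N = ?Q * Y"
  have s: "s < n" using sp by simp
  have P: "?P \<in> carrier_mat n n" and Q: "?Q \<in> carrier_mat n n" and Y: "Y \<in> carrier_mat n n"
    and N: "N \<in> carrier_mat n n" using M by (auto simp: block_shear_def Y_def N_def)
  have PQ: "?P * ?Q = 1\<^sub>m n" and QP: "?Q * ?P = 1\<^sub>m n"
    unfolding block_shear_mult[OF s] by (simp_all add: block_shear_zero)
  have Y_index: "\<And>i j. i < n \<Longrightarrow> j < n \<Longrightarrow>
      Y $$ (i,j) = (if j = s then \<Sum>y\<in>{s..<s + p}. M $$ (i,y) else M $$ (i,j))"
    unfolding Y_def using mult_block_shear_one_index[OF M _ _ sp] by blast
  have N_index: "\<And>i j. i < n \<Longrightarrow> j < n \<Longrightarrow>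
      N $$ (i,j) = Y $$ (i,j) - (if s < i \<and> i < s + p then Y $$ (s,j) else 0)"
    unfolding N_def using block_shear_mult_index[OF Y _ _ s] by simp
  have "?P * N * ?Q = ?P * ?Q * Y * ?Q"
    unfolding N_def using assoc_mult_mat[OF P Q Y] by simp
  also have "\<dots> = M" unfolding PQ Y_def using M P Q
    by (simp add: assoc_mult_mat[OF M P Q] PQ)
  finally have "similar_mat M N"
    by (intro similar_matI[OF _ PQ QP]) (use M N P Q in auto)
  then have "char_poly M = char_poly N" by (rule char_poly_similar)
  also have "\<dots> = char_poly (remove_interval N (s + 1) (p - 1)) * char_poly (principal_block N (s + 1) (p - 1))"
  proof (rule char_poly_invariant_interval[OF N])
    fix i j assume i: "s + 1 \<le> i" "i < s + 1 + (p - 1)" and j: "j < n" "j < s + 1 \<or> s + 1 + (p - 1) \<le> j"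
    show "N $$ (i,j) = 0"
      using i j sp inside[of i] outside[of i j] by (cases "j = s") (auto simp: N_index Y_index)
  qed (use sp in auto)
  also have "remove_interval N (s + 1) (p - 1) = collapse_block M s p"
  proof (rule eq_matI)
    fix i j assume "i < dim_row (collapse_block M s p)" "j < dim_col (collapse_block M s p)"
    then have "i < n - (p - 1)" "j < n - (p - 1)" using M by (auto simp: collapse_block_def)
    moreover have "skip_interval (s + 1) (p - 1) i < n" "skip_interval (s + 1) (p - 1) j < n"
      "\<not> (s < skip_interval (s + 1) (p - 1) i \<and> skip_interval (s + 1) (p - 1) i < s + p)"
      "skip_interval (s + 1) (p - 1) j = s \<longleftrightarrow> j = s"
      using calculation sp by (auto simp: skip_interval_def)
    ultimately show "remove_interval N (s + 1) (p - 1) $$ (i,j) = collapse_block M s p $$ (i,j)"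
      using M N by (auto simp: remove_interval_def collapse_block_def collapse_cols_def N_index Y_index)
  qed (use M N in \<open>auto simp: remove_interval_def collapse_block_def\<close>)
  also have "principal_block N (s + 1) (p - 1) = reduced_block M s p"
    by (rule eq_matI) (use sp in \<open>auto simp: principal_block_def reduced_block_def N_index Y_index\<close>)
  finally show ?thesis .
qed

section \<open>Block partitions\<close>

text \<open>A list \<open>ns\<close> of block sizes partitions the indices \<open>0..<sum_list ns\<close> into consecutive blocks.\<close>
definition block_start :: "nat list \<Rightarrow> nat \<Rightarrow> nat" where
  "block_start ns i = sum_list (take i ns)"

definition block :: "nat list \<Rightarrow> nat \<Rightarrow> nat set" where
  "block ns i = {block_start ns i..<block_start ns i + ns ! i}"

lemma block_start_Suc: "i < length ns \<Longrightarrow> block_start ns (Suc i) = block_start ns i + ns ! i"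
  unfolding block_start_def by (simp add: take_Suc_conv_app_nth)

lemma block_start_mono: "i \<le> j \<Longrightarrow> block_start ns i \<le> block_start ns j"
proof -
  assume "i \<le> j"
  then obtain d where "j = i + d" using le_Suc_ex by blast
  then show ?thesis by (simp add: block_start_def take_add)
qed

lemma block_start_le: "block_start ns i \<le> sum_list ns"
  unfolding block_start_def by (metis append_take_drop_id le_add1 sum_list_append)

lemma block_start_length: "block_start ns (length ns) = sum_list ns"
  unfolding block_start_def by simp

lemma block_start_Cons_Suc: "block_start (n # ns) (Suc i) = n + block_start ns i"
  unfolding block_start_def by simp

lemma block_less_sum_list: "i < length ns \<Longrightarrow> x \<in> block ns i \<Longrightarrow> x < sum_list ns"
  using block_start_Suc[of i ns] block_start_le[of ns "Suc i"] unfolding block_def by auto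

lemma block_disjoint: "i < j \<Longrightarrow> j < length ns \<Longrightarrow> block ns i \<inter> block ns j = {}"
  using block_start_Suc[of i ns] block_start_mono[of "Suc i" j ns] unfolding block_def by auto

lemma block_start_in_block: "0 < ns ! i \<Longrightarrow> block_start ns i \<in> block ns i"
  by (simp add: block_def)

lemma ex_block: "y < sum_list ns \<Longrightarrow> \<exists>j<length ns. y \<in> block ns j"
proof (induction ns arbitrary: y)
  case (Cons n ns)
  show ?case
  proof (cases "y < n")
    case True
    then show ?thesis by (intro exI[of _ 0]) (simp add: block_def block_start_def)
  next
    case False
    then have "y - n < sum_list ns" using Cons.prems by simp
    then obtain j where "j < length ns" "y - n \<in> block ns j" using Cons.IH by blast
    with False show ?thesis
      by (intro exI[of _ "Suc j"]) (auto simp: block_def block_start_Cons_Suc)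
  qed
qed simp

lemma sum_shift_interval: "(\<Sum>y\<in>{a..<a + p}. f (b + (y - a))) = (\<Sum>z\<in>{b..<b + (p::nat)}. f z)"
  by (rule sum.reindex_bij_witness[of _ "\<lambda>z. z - b + a" "\<lambda>y. b + (y - a)"]) auto

lemma sum_block: "(\<Sum>y\<in>block ns i. f y) = (\<Sum>b<ns ! i. f (block_start ns i + b))"
  using sum_shift_interval[where a = 0 and b = "block_start ns i" and p = "ns ! i" and f = f]
  unfolding block_def by (simp add: lessThan_atLeast0)

lemma sum_blocks: "t \<le> length ns \<Longrightarrow> (\<Sum>j<t. \<Sum>y\<in>block ns j. f y) = (\<Sum>y<block_start ns t. f y)"
proof (induction t)
  case (Suc t)
  then have "(\<Sum>j<Suc t. \<Sum>y\<in>block ns j. f y) = (\<Sum>y<block_start ns t. f y) + (\<Sum>y\<in>block ns t. f y)"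
    by simp
  also have "\<dots> = (\<Sum>y<block_start ns (Suc t). f y)"
    using Suc(2) unfolding block_start_Suc[of t ns] block_def
    by (simp add: block_start_Suc lessThan_atLeast0 sum.atLeastLessThan_concat)
  finally show ?case .
qed (simp add: block_start_def)

text \<open>The blocks \<open>0, \<dots>, t - 1\<close> collapsed to single indices, the later blocks untouched.\<close>
definition partial_quotient_row :: "nat list \<Rightarrow> nat \<Rightarrow> nat \<Rightarrow> nat" where
  "partial_quotient_row ns t i = (if i < t then block_start ns i else block_start ns t + (i - t))"

definition partial_quotient_cols :: "nat list \<Rightarrow> nat \<Rightarrow> nat \<Rightarrow> nat set" where
  "partial_quotient_cols ns t j = (if j < t then block ns j else {block_start ns t + (j - t)})"

definition partial_quotient :: "'a :: comm_ring_1 mat \<Rightarrow> nat list \<Rightarrow> nat \<Rightarrow> 'a mat" where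
  "partial_quotient M ns t = mat (t + (sum_list ns - block_start ns t)) (t + (sum_list ns - block_start ns t))
     (\<lambda>(i,j). \<Sum>y\<in>partial_quotient_cols ns t j. M $$ (partial_quotient_row ns t i, y))"

definition quotient_mat :: "'a :: comm_ring_1 mat \<Rightarrow> nat list \<Rightarrow> 'a mat" where
  "quotient_mat M ns = mat (length ns) (length ns) (\<lambda>(i,j). \<Sum>y\<in>block ns j. M $$ (block_start ns i, y))"

lemma partial_quotient_0: "M \<in> carrier_mat (sum_list ns) (sum_list ns) \<Longrightarrow> partial_quotient M ns 0 = M"
  by (rule eq_matI)
    (auto simp: partial_quotient_def partial_quotient_cols_def partial_quotient_row_def block_start_def)

lemma partial_quotient_length: "partial_quotient M ns (length ns) = quotient_mat M ns"
  by (rule eq_matI)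
    (auto simp: partial_quotient_def partial_quotient_cols_def partial_quotient_row_def
      quotient_mat_def block_start_length)

lemma collapse_block_partial_quotient:
  fixes M :: "'a :: comm_ring_1 mat"
  assumes t: "t < length ns" and pos: "1 \<le> ns ! t"
  shows "collapse_block (partial_quotient M ns t) t (ns ! t) = partial_quotient M ns (Suc t)"
proof -
  let ?p = "ns ! t" and ?k = "skip_interval (t + 1) (ns ! t - 1)"
  have oS: "block_start ns (Suc t) = block_start ns t + ?p" using block_start_Suc[OF t] .
  have le: "block_start ns t + ?p \<le> sum_list ns" using block_start_le[of ns "Suc t"] oS by simp
  show ?thesis
  proof (rule eq_matI)
    fix i j assume "i < dim_row (partial_quotient M ns (Suc t))" "j < dim_col (partial_quotient M ns (Suc t))"
    then have i: "i < Suc t + (sum_list ns - block_start ns (Suc t))"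
      and j: "j < Suc t + (sum_list ns - block_start ns (Suc t))"
      by (auto simp: partial_quotient_def)
    have ki: "?k i < t + (sum_list ns - block_start ns t)" using i le pos oS by (auto simp: skip_interval_def)
    have row: "partial_quotient_row ns t (?k i) = partial_quotient_row ns (Suc t) i"
      using i le pos oS by (cases "i < t"; cases "i = t") (auto simp: skip_interval_def partial_quotient_row_def)
    have "collapse_block (partial_quotient M ns t) t ?p $$ (i,j)
        = (\<Sum>y\<in>collapse_cols t ?p j. partial_quotient M ns t $$ (?k i, y))"
      using i j le pos oS by (simp add: collapse_block_def partial_quotient_def)
    also have "\<dots> = (\<Sum>y\<in>partial_quotient_cols ns (Suc t) j. M $$ (partial_quotient_row ns (Suc t) i, y))"
    proof (cases "j = t")
      case True
      have "(\<Sum>y\<in>collapse_cols t ?p j. partial_quotient M ns t $$ (?k i, y))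
          = (\<Sum>y\<in>{t..<t + ?p}. M $$ (partial_quotient_row ns (Suc t) i, block_start ns t + (y - t)))"
        by (rule sum.cong) (use True ki row le in \<open>auto simp: collapse_cols_def partial_quotient_def
          partial_quotient_cols_def\<close>)
      also have "\<dots> = (\<Sum>y\<in>block ns t. M $$ (partial_quotient_row ns (Suc t) i, y))"
        unfolding block_def by (rule sum_shift_interval)
      finally show ?thesis using True by (simp add: partial_quotient_cols_def)
    next
      case False
      have "?k j < t + (sum_list ns - block_start ns t)"
        "partial_quotient_cols ns t (?k j) = partial_quotient_cols ns (Suc t) j"
        using False j le pos oS by (auto simp: skip_interval_def partial_quotient_cols_def)
      then show ?thesis using False ki row by (simp add: collapse_cols_def partial_quotient_def)
    qed
    also have "\<dots> = partial_quotient M ns (Suc t) $$ (i,j)" using i j by (simp add: partial_quotient_def)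
    finally show "collapse_block (partial_quotient M ns t) t ?p $$ (i,j) = partial_quotient M ns (Suc t) $$ (i,j)" .
  qed (use le pos oS in \<open>auto simp: collapse_block_def partial_quotient_def\<close>)
qed

lemma reduced_block_partial_quotient:
  assumes t: "t < length ns"
  shows "reduced_block (partial_quotient M ns t) t (ns ! t) = reduced_block M (block_start ns t) (ns ! t)"
proof (rule eq_matI)
  have le: "block_start ns t + ns ! t \<le> sum_list ns"
    using block_start_le[of ns "Suc t"] block_start_Suc[OF t] by simp
  fix i j assume "i < dim_row (reduced_block M (block_start ns t) (ns ! t))"
    "j < dim_col (reduced_block M (block_start ns t) (ns ! t))"
  then show "reduced_block (partial_quotient M ns t) t (ns ! t) $$ (i,j) =
      reduced_block M (block_start ns t) (ns ! t) $$ (i,j)"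
    using le by (simp add: reduced_block_def partial_quotient_def partial_quotient_cols_def
      partial_quotient_row_def)
qed (auto simp: reduced_block_def)

theorem char_poly_block_partition:
  fixes M :: "'a :: idom mat"
  assumes M: "M \<in> carrier_mat (sum_list ns) (sum_list ns)"
    and pos: "\<And>i. i < length ns \<Longrightarrow> 1 \<le> ns ! i"
    and outside: "\<And>i x y. i < length ns \<Longrightarrow> x \<in> block ns i \<Longrightarrow> y < sum_list ns \<Longrightarrow> y \<notin> block ns i \<Longrightarrow>
      M $$ (x,y) = M $$ (block_start ns i, y)"
    and inside: "\<And>i x. i < length ns \<Longrightarrow> x \<in> block ns i \<Longrightarrow>
      (\<Sum>y\<in>block ns i. M $$ (x,y)) = (\<Sum>y\<in>block ns i. M $$ (block_start ns i, y))"
  shows "char_poly M = char_poly (quotient_mat M ns) *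
    (\<Prod>i<length ns. char_poly (reduced_block M (block_start ns i) (ns ! i)))"
proof -
  have "char_poly M = char_poly (partial_quotient M ns t) *
      (\<Prod>i<t. char_poly (reduced_block M (block_start ns i) (ns ! i)))" if "t \<le> length ns" for t
    using that
  proof (induction t)
    case 0
    then show ?case using partial_quotient_0[OF M] by simp
  next
    case (Suc t)
    then have t: "t < length ns" by simp
    let ?p = "ns ! t" and ?G = "partial_quotient M ns t"
    let ?d = "t + (sum_list ns - block_start ns t)"
    have le: "block_start ns t + ?p \<le> sum_list ns"
      using block_start_le[of ns "Suc t"] block_start_Suc[OF t] by simp
    have G: "?G \<in> carrier_mat ?d ?d" by (simp add: partial_quotient_def)
    have G_block: "?G $$ (x,j) = (\<Sum>y\<in>partial_quotient_cols ns t j. M $$ (block_start ns t + (x - t), y))"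
      if "t \<le> x" "x < t + ?p" "j < ?d" for x j
      using that le by (simp add: partial_quotient_def partial_quotient_row_def)
    have "char_poly ?G = char_poly (collapse_block ?G t ?p) * char_poly (reduced_block ?G t ?p)"
    proof (rule char_poly_collapse_block[OF G])
      fix x j assume x: "t \<le> x" "x < t + ?p" and j: "j < ?d" "j < t \<or> t + ?p \<le> j"
      have "y < sum_list ns \<and> y \<notin> block ns t" if "y \<in> partial_quotient_cols ns t j" for y
      proof (cases "j < t")
        case True
        then show ?thesis using that block_disjoint[OF True t] block_less_sum_list[of j ns y] t
          by (auto simp: partial_quotient_cols_def)
      qed (use that j le in \<open>auto simp: partial_quotient_cols_def block_def\<close>)
      moreover have "block_start ns t + (x - t) \<in> block ns t" using x by (auto simp: block_def)
      ultimately show "?G $$ (x,j) = ?G $$ (t,j)"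
        using x j pos[OF t] by (auto simp: G_block intro!: sum.cong outside[OF t])
    next
      fix x assume x: "t \<le> x" "x < t + ?p"
      have "(\<Sum>y\<in>{t..<t + ?p}. ?G $$ (z,y)) = (\<Sum>y\<in>block ns t. M $$ (block_start ns t + (z - t), y))"
        if "t \<le> z" "z < t + ?p" for z
      proof -
        have "(\<Sum>y\<in>{t..<t + ?p}. ?G $$ (z,y)) =
            (\<Sum>y\<in>{t..<t + ?p}. M $$ (block_start ns t + (z - t), block_start ns t + (y - t)))"
          by (rule sum.cong) (use that le in \<open>auto simp: G_block partial_quotient_cols_def\<close>)
        also have "\<dots> = (\<Sum>y\<in>block ns t. M $$ (block_start ns t + (z - t), y))"
          unfolding block_def by (rule sum_shift_interval)
        finally show ?thesis .
      qed
      moreover have "block_start ns t + (x - t) \<in> block ns t" using x by (auto simp: block_def)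
      ultimately show "(\<Sum>y\<in>{t..<t + ?p}. ?G $$ (x,y)) = (\<Sum>y\<in>{t..<t + ?p}. ?G $$ (t,y))"
        using x pos[OF t] inside[OF t] by simp
    qed (use le pos[OF t] in auto)
    also have "\<dots> = char_poly (partial_quotient M ns (Suc t)) * char_poly (reduced_block M (block_start ns t) ?p)"
      unfolding collapse_block_partial_quotient[OF t pos[OF t]] reduced_block_partial_quotient[OF t] ..
    finally show ?case using Suc by (simp add: mult.assoc)
  qed
  from this[OF le_refl] show ?thesis unfolding partial_quotient_length .
qed

lemma char_poly_const_row_sum:
  fixes B :: "'a :: idom mat"
  assumes B: "B \<in> carrier_mat p p" and p: "1 \<le> p"
    and row_sum: "\<And>x. x < p \<Longrightarrow> (\<Sum>y<p. B $$ (x,y)) = c"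
  shows "char_poly B = [:- c, 1:] * char_poly (reduced_block B 0 p)"
proof -
  have "char_poly B = char_poly (collapse_block B 0 p) * char_poly (reduced_block B 0 p)"
    by (rule char_poly_collapse_block[OF B])
      (use p row_sum in \<open>auto simp: lessThan_atLeast0\<close>)
  also have "collapse_block B 0 p = mat 1 1 (\<lambda>_. c)"
    by (rule eq_matI) (use B p row_sum[of 0] in \<open>auto simp: collapse_block_def collapse_cols_def
      skip_interval_def lessThan_atLeast0\<close>)
  also have "char_poly (mat 1 1 (\<lambda>_. c)) = [:- c, 1:]"
    unfolding char_poly_defs by (simp add: det_single)
  finally show ?thesis .
qed

text \<open>The all-ones vector is an eigenvector of the quotient matrix.\<close>
lemma quotient_mat_const_row_sum_root:
  fixes M :: "'a :: field mat"
  assumes "0 < length ns" and pos: "\<And>i. i < length ns \<Longrightarrow> 1 \<le> ns ! i"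
    and row_sum: "\<And>x. x < sum_list ns \<Longrightarrow> (\<Sum>y<sum_list ns. M $$ (x,y)) = q"
  shows "poly (char_poly (quotient_mat M ns)) q = 0"
proof -
  let ?k = "length ns"
  define v :: "'a vec" where "v = vec ?k (\<lambda>_. 1)"
  have "quotient_mat M ns *\<^sub>v v = q \<cdot>\<^sub>v v"
  proof (rule eq_vecI)
    fix i assume "i < dim_vec (q \<cdot>\<^sub>v v)"
    then have i: "i < ?k" by (simp add: v_def)
    have "block_start ns i < sum_list ns"
      using block_less_sum_list[OF i block_start_in_block] pos[OF i] by simp
    moreover have "(quotient_mat M ns *\<^sub>v v) $ i = (\<Sum>j<?k. \<Sum>y\<in>block ns j. M $$ (block_start ns i, y))"
      using i by (simp add: quotient_mat_def v_def scalar_prod_def lessThan_atLeast0)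
    ultimately show "(quotient_mat M ns *\<^sub>v v) $ i = (q \<cdot>\<^sub>v v) $ i"
      using i row_sum by (simp add: sum_blocks block_start_length v_def)
  qed (simp add: v_def quotient_mat_def)
  moreover have "v \<noteq> 0\<^sub>v ?k" using assms(1) by (auto simp: v_def dest!: arg_cong[of _ _ "\<lambda>w. w $ 0"])
  ultimately have "eigenvector (quotient_mat M ns) v q"
    unfolding eigenvector_def by (simp add: v_def quotient_mat_def)
  then have "eigenvalue (quotient_mat M ns) q" unfolding eigenvalue_def by blast
  then show ?thesis
    using eigenvalue_root_char_poly[of "quotient_mat M ns" ?k] by (simp add: quotient_mat_def)
qed

section \<open>Spectra as multisets of roots\<close>

definition linear_factors :: "complex multiset \<Rightarrow> complex poly" where
  "linear_factors S = prod_mset (image_mset (\<lambda>a. [:- a, 1:]) S)"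

lemma linear_factors_add: "linear_factors (S + T) = linear_factors S * linear_factors T"
  unfolding linear_factors_def by simp

lemma order_linear_factors: "order a (linear_factors S) = count S a"
proof (induction S)
  case empty
  then show ?case by (simp add: linear_factors_def order_0I)
next
  case (add x S)
  have nz: "linear_factors S \<noteq> 0" by (auto simp: linear_factors_def prod_mset_zero_iff)
  have "linear_factors (add_mset x S) = [:- x, 1:] * linear_factors S"
    by (simp add: linear_factors_def)
  also have "order a \<dots> = order a [:- x, 1:] + order a (linear_factors S)"
    by (rule order_mult) (metis nz mult_eq_0_iff pCons_eq_0_iff one_neq_zero)
  finally show ?case using add order_linear'[of a "- x"] by auto
qed

lemma linear_factors_inj: "linear_factors S = linear_factors T \<Longrightarrow> S = T"
  by (rule multiset_eqI) (metis order_linear_factors)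

lemma spec_eqI:
  assumes "char_poly (map_mat complex_of_real A) = linear_factors S"
  shows "spec A = S"
  unfolding spec_def using assms
  by (intro the_equality) (auto simp: linear_factors_def[symmetric] intro: linear_factors_inj)

lemma char_poly_of_real:
  "A \<in> carrier_mat n n \<Longrightarrow> char_poly (map_mat complex_of_real A) = map_poly complex_of_real (char_poly A)"
  using of_real_hom.char_poly_hom by auto

lemma char_poly_eq_linear_factors_spec:
  assumes A: "A \<in> carrier_mat n n"
  shows "char_poly (map_mat complex_of_real A) = linear_factors (spec A)"
proof -
  obtain as where as: "char_poly (map_mat complex_of_real A) = (\<Prod>a\<leftarrow>as. [:- a, 1:])"
    using char_poly_factorized[of "map_mat complex_of_real A" n] A by auto
  also have "\<dots> = linear_factors (mset as)" unfolding linear_factors_def by (induction as) auto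
  finally show ?thesis using spec_eqI by metis
qed

lemma spec_char_poly_mult_prod:
  assumes A: "A \<in> carrier_mat n n" and B: "B \<in> carrier_mat m m"
    and C: "\<And>i. i \<in> I \<Longrightarrow> C i \<in> carrier_mat (d i) (d i)" and I: "finite I"
    and cp: "char_poly A = char_poly B * (\<Prod>i\<in>I. char_poly (C i))"
  shows "spec A = spec B + (\<Sum>i\<in>I. spec (C i))"
proof (rule spec_eqI)
  interpret of_real_poly: map_poly_comm_ring_hom "of_real :: real \<Rightarrow> complex" ..
  have "char_poly (map_mat complex_of_real A) = map_poly complex_of_real (char_poly B) *
      (\<Prod>i\<in>I. map_poly complex_of_real (char_poly (C i)))"
    unfolding char_poly_of_real[OF A] cp by (simp add: of_real_poly.hom_mult of_real_poly.hom_prod)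
  also have "\<dots> = linear_factors (spec B) * (\<Prod>i\<in>I. linear_factors (spec (C i)))"
    using char_poly_eq_linear_factors_spec[OF B] char_poly_eq_linear_factors_spec[OF C]
      char_poly_of_real[OF B] char_poly_of_real[OF C] by simp
  also have "(\<Prod>i\<in>I. linear_factors (spec (C i))) = linear_factors (\<Sum>i\<in>I. spec (C i))"
    using I by (induction I rule: finite_induct) (auto simp: linear_factors_add, simp add: linear_factors_def)
  finally show "char_poly (map_mat complex_of_real A) = linear_factors (spec B + (\<Sum>i\<in>I. spec (C i)))"
    by (simp add: linear_factors_add)
qed

lemma spec_char_poly_linear_factor:
  assumes B: "B \<in> carrier_mat n n" and B': "B' \<in> carrier_mat m m"
    and cp: "char_poly B = [:- c, 1:] * char_poly B'"
  shows "spec B = add_mset (complex_of_real c) (spec B')"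
proof (rule spec_eqI)
  interpret of_real_poly: map_poly_comm_ring_hom "of_real :: real \<Rightarrow> complex" ..
  show "char_poly (map_mat complex_of_real B) = linear_factors (add_mset (complex_of_real c) (spec B'))"
    unfolding char_poly_of_real[OF B] cp of_real_poly.hom_mult
      char_poly_eq_linear_factors_spec[OF B', unfolded char_poly_of_real[OF B']]
    by (simp add: linear_factors_def)
qed

lemma similar_mat_spec:
  assumes A: "A \<in> carrier_mat n n" and B: "B \<in> carrier_mat n n" and "similar_mat A B"
  shows "spec A = spec B"
  using char_poly_similar[OF assms(3)] char_poly_eq_linear_factors_spec[OF B]
    char_poly_of_real[OF A] char_poly_of_real[OF B] by (intro spec_eqI) simp

lemma spec_empty: "A \<in> carrier_mat 0 0 \<Longrightarrow> spec A = {#}"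
  by (rule spec_eqI) (simp add: char_poly_defs linear_factors_def)

lemma root_char_poly_in_spec:
  assumes A: "A \<in> carrier_mat n n" and "poly (char_poly A) q = 0"
  shows "complex_of_real q \<in># spec A"
proof -
  have "poly (linear_factors (spec A)) (complex_of_real q) = 0"
    unfolding char_poly_eq_linear_factors_spec[OF A, symmetric] char_poly_of_real[OF A]
    using assms(2) by simp
  then show ?thesis unfolding linear_factors_def poly_prod_mset by (auto simp: prod_mset_zero_iff)
qed

lemma spec_add_scalar_one:
  assumes A: "A \<in> carrier_mat n n"
  shows "spec (A + d \<cdot>\<^sub>m 1\<^sub>m n) = image_mset (\<lambda>x. x + complex_of_real d) (spec A)"
proof (rule spec_eqI)
  let ?A = "map_mat complex_of_real A" and ?D = "map_mat complex_of_real (A + d \<cdot>\<^sub>m 1\<^sub>m n)"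
  have "poly (char_poly ?D) z = poly (linear_factors (image_mset (\<lambda>x. x + complex_of_real d) (spec A))) z"
    for z
  proof -
    have A': "?A \<in> carrier_mat n n" and D': "?D \<in> carrier_mat n n" using A by auto
    have "char_matrix ?D z = char_matrix ?A (z - complex_of_real d)"
      by (rule eq_matI) (use A in \<open>auto simp: char_matrix_def\<close>)
    then have "poly (char_poly ?D) z = poly (char_poly ?A) (z - complex_of_real d)"
      unfolding char_poly_matrix[OF D'] char_poly_matrix[OF A'] by simp
    also have "\<dots> = poly (linear_factors (image_mset (\<lambda>x. x + complex_of_real d) (spec A))) z"
      unfolding char_poly_eq_linear_factors_spec[OF A] linear_factors_def poly_prod_mset
      by (simp add: multiset.map_comp o_def algebra_simps)
    finally show ?thesis .
  qed
  then show "char_poly ?D = linear_factors (image_mset (\<lambda>x. x + complex_of_real d) (spec A))"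
    by (intro poly_ext) auto
qed

section \<open>Generalized composition along Schroeder trees\<close>

lemma adj_commute: "adj E x y = adj E y x"
  unfolding adj_def by (auto simp: insert_commute)

lemma leaves_not_Nil: "wf_stree t \<Longrightarrow> leaves t \<noteq> []"
proof (induction t)
  case (Node E ts)
  then obtain t where "t \<in> set ts" by (cases ts) auto
  with Node show ?case by auto
qed simp

lemma compose_subset_leaves: "e \<in> compose t \<Longrightarrow> e \<subseteq> set (leaves t)"
proof (induction t arbitrary: e)
  case (Node E ts)
  then show ?case by (fastforce dest: nth_mem)
qed simp

lemma distinct_concat_nth_disjoint:
  assumes "distinct (concat xss)" "i < j" "j < length xss"
  shows "set (xss ! i) \<inter> set (xss ! j) = {}"
proof -
  have "distinct (concat (take j xss) @ xss ! j @ concat (drop (Suc j) xss))"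
    using assms(1) id_take_nth_drop[OF assms(3)] by (metis concat.simps(2) concat_append)
  then have "set (concat (take j xss)) \<inter> set (xss ! j) = {}" by auto
  moreover have "xss ! i \<in> set (take j xss)" using assms(2,3) by (auto simp: in_set_conv_nth)
  ultimately show ?thesis by auto
qed

lemma nth_concat_block_start:
  "i < length xss \<Longrightarrow> a < length (xss ! i) \<Longrightarrow>
    concat xss ! (block_start (map length xss) i + a) = xss ! i ! a"
proof (induction xss arbitrary: i)
  case (Cons xs xss)
  then show ?case
    by (cases i) (auto simp: block_start_def nth_append)
qed simp

lemma reg_eq_deg: "regular V E \<Longrightarrow> u \<in> V \<Longrightarrow> deg V E u = reg V E"
  unfolding regular_def reg_def by (metis someI)

lemma regular_Leaf: "regular (set (leaves (Leaf x))) (compose (Leaf x))"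
  unfolding regular_def deg_def adj_def by auto

text \<open>The matrix \<open>U\<close> of \<open>\<Or>t\<close>, with rows and columns indexed by the positions of the leaves
  of \<open>t\<close> from left to right.\<close>
definition Utree :: "real \<Rightarrow> real \<Rightarrow> real \<Rightarrow> real \<Rightarrow> stree \<Rightarrow> real mat" where
  "Utree \<alpha> \<beta> \<gamma> \<delta> t = mat (length (leaves t)) (length (leaves t)) (\<lambda>(i,j).
      \<alpha> * (if adj (compose t) (leaves t ! i) (leaves t ! j) then 1 else 0) + \<beta> * (if i = j then 1 else 0) + \<gamma>
      + \<delta> * (if i = j then real (deg (set (leaves t)) (compose t) (leaves t ! i)) else 0))"

lemma Utree_carrier: "Utree \<alpha> \<beta> \<gamma> \<delta> t \<in> carrier_mat (length (leaves t)) (length (leaves t))"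
  by (simp add: Utree_def)

lemma Umat_eq_Utree: "leaves T = [0..<n] \<Longrightarrow> Umat \<alpha> \<beta> \<gamma> \<delta> n (compose T) = Utree \<alpha> \<beta> \<gamma> \<delta> T"
  by (rule eq_matI) (auto simp: Umat_def Utree_def)

lemma card_nth_filter: "distinct L \<Longrightarrow> card {b. b < length L \<and> P (L ! b)} = card {v \<in> set L. P v}"
proof -
  assume "distinct L"
  then have "inj_on (\<lambda>b. L ! b) {b. b < length L \<and> P (L ! b)}" by (auto intro: inj_on_nth)
  moreover have "(\<lambda>b. L ! b) ` {b. b < length L \<and> P (L ! b)} = {v \<in> set L. P v}"
    by (auto simp: in_set_conv_nth)
  ultimately show ?thesis using card_image by metis
qed

lemma Utree_row_sum:
  assumes "distinct (leaves t)" and a: "a < length (leaves t)"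
  shows "(\<Sum>b<length (leaves t). Utree \<alpha> \<beta> \<gamma> \<delta> t $$ (a,b)) =
    (\<alpha> + \<delta>) * real (deg (set (leaves t)) (compose t) (leaves t ! a)) + \<beta> + \<gamma> * real (length (leaves t))"
proof -
  let ?L = "leaves t" and ?E = "compose t"
  let ?d = "real (deg (set ?L) ?E (?L ! a))"
  have "(\<Sum>b<length ?L. if adj ?E (?L ! a) (?L ! b) then 1 else 0) = real (card {b. b < length ?L \<and> adj ?E (?L ! a) (?L ! b)})"
    by (simp add: sum.If_cases Int_def conj_commute)
  also have "\<dots> = ?d" unfolding card_nth_filter[OF assms(1)] deg_def ..
  finally have adj_count: "(\<Sum>b<length ?L. if adj ?E (?L ! a) (?L ! b) then 1 else 0) = ?d" .
  have "(\<Sum>b<length ?L. Utree \<alpha> \<beta> \<gamma> \<delta> t $$ (a,b)) = (\<Sum>b<length ?L.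
      \<alpha> * (if adj ?E (?L ! a) (?L ! b) then 1 else 0) + (\<beta> * (if b = a then 1 else 0) + \<gamma>
      + \<delta> * (if b = a then ?d else 0)))"
    by (rule sum.cong) (use a in \<open>auto simp: Utree_def\<close>)
  also have "\<dots> = \<alpha> * ?d + (\<beta> + \<gamma> * length ?L + \<delta> * ?d)"
    using a by (simp add: sum.distrib sum_distrib_left[symmetric] adj_count if_distrib[of "\<lambda>x. \<beta> * x"]
      if_distrib[of "\<lambda>x. \<delta> * x"] cong: if_cong)
  finally show ?thesis by (simp add: algebra_simps)
qed

definition regular_row_sum :: "real \<Rightarrow> real \<Rightarrow> real \<Rightarrow> real \<Rightarrow> stree \<Rightarrow> real" where
  "regular_row_sum \<alpha> \<beta> \<gamma> \<delta> t =
     (\<alpha> + \<delta>) * real (reg (set (leaves t)) (compose t)) + \<beta> + \<gamma> * real (length (leaves t))"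

lemma Utree_row_sum_regular:
  assumes "distinct (leaves t)" "regular (set (leaves t)) (compose t)" "a < length (leaves t)"
  shows "(\<Sum>b<length (leaves t). Utree \<alpha> \<beta> \<gamma> \<delta> t $$ (a,b)) = regular_row_sum \<alpha> \<beta> \<gamma> \<delta> t"
  unfolding Utree_row_sum[OF assms(1,3)] reg_eq_deg[OF assms(2) nth_mem[OF assms(3)]] regular_row_sum_def ..

locale wf_node =
  fixes E :: "nat set set" and ts :: "stree list"
  assumes wf: "wf_stree (Node E ts)" and distinct_leaves: "distinct (leaves (Node E ts))"
begin

abbreviation sizes :: "nat list" where
  "sizes \<equiv> map (\<lambda>c. length (leaves c)) ts"

lemma edge_bounds: "{a, b} \<in> E \<Longrightarrow> a \<noteq> b \<and> a < length ts \<and> b < length ts"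
  using wf by (auto simp: doubleton_eq_iff)

lemma child_leaves_disjoint:
  "i < length ts \<Longrightarrow> j < length ts \<Longrightarrow> i \<noteq> j \<Longrightarrow> set (leaves (ts ! i)) \<inter> set (leaves (ts ! j)) = {}"
  using distinct_concat_nth_disjoint[of "map leaves ts" i j] distinct_concat_nth_disjoint[of "map leaves ts" j i]
    distinct_leaves by (cases "i < j") auto

lemma distinct_child_leaves: "i < length ts \<Longrightarrow> distinct (leaves (ts ! i))"
  using distinct_leaves by (simp add: distinct_concat_iff)

lemma set_leaves_Node: "set (leaves (Node E ts)) = (\<Union>i<length ts. set (leaves (ts ! i)))"
proof -
  have "set ts = (\<lambda>i. ts ! i) ` {..<length ts}" by (auto simp: in_set_conv_nth)
  then show ?thesis by simp
qed

lemma adj_compose_Node_iff: "adj (compose (Node E ts)) u v \<longleftrightarrow> u \<noteq> v \<and>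
   ((\<exists>l<length ts. {u,v} \<in> compose (ts ! l)) \<or>
    (\<exists>a b. {a,b} \<in> E \<and> a < length ts \<and> b < length ts \<and>
      u \<in> set (leaves (ts ! a)) \<and> v \<in> set (leaves (ts ! b))))"
proof -
  have children: "{u,v} \<in> (\<Union>t\<in>set ts. compose t) \<longleftrightarrow> (\<exists>l<length ts. {u,v} \<in> compose (ts ! l))"
    by (auto simp: in_set_conv_nth) (use nth_mem in blast)
  have "{u,v} = {x,y} \<longleftrightarrow> (u = x \<and> v = y) \<or> (u = y \<and> v = x)" for x y :: nat
    by (auto simp: doubleton_eq_iff)
  then have across: "{u,v} \<in> {{x, y} | x y i j. {i, j} \<in> E \<and> i < length ts \<and> j < length ts \<and>
        x \<in> set (leaves (ts ! i)) \<and> y \<in> set (leaves (ts ! j))} \<longleftrightarrow>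
      (\<exists>a b. {a,b} \<in> E \<and> a < length ts \<and> b < length ts \<and>
        u \<in> set (leaves (ts ! a)) \<and> v \<in> set (leaves (ts ! b)))"
    by (auto simp: insert_commute) (metis insert_commute)
  show ?thesis unfolding adj_def compose.simps Un_iff children across ..
qed

lemma adj_compose_within:
  assumes i: "i < length ts" and u: "u \<in> set (leaves (ts ! i))" and v: "v \<in> set (leaves (ts ! i))"
  shows "adj (compose (Node E ts)) u v \<longleftrightarrow> adj (compose (ts ! i)) u v"
proof -
  have "l = i" if "l < length ts" "{u,v} \<in> compose (ts ! l)" for l
    using compose_subset_leaves[OF that(2)] child_leaves_disjoint[of i l] i u that(1) by auto
  moreover have "\<not> ({a,b} \<in> E \<and> a < length ts \<and> b < length ts \<and>
      u \<in> set (leaves (ts ! a)) \<and> v \<in> set (leaves (ts ! b)))" for a b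
    using edge_bounds[of a b] child_leaves_disjoint[of a i] child_leaves_disjoint[of b i] i u v
    by (cases "a = i") auto
  ultimately show ?thesis unfolding adj_compose_Node_iff using i by (auto simp: adj_def)
qed

lemma adj_compose_across:
  assumes i: "i < length ts" and j: "j < length ts" and ij: "i \<noteq> j"
    and u: "u \<in> set (leaves (ts ! i))" and v: "v \<in> set (leaves (ts ! j))"
  shows "adj (compose (Node E ts)) u v \<longleftrightarrow> adj E i j"
proof -
  have "u \<noteq> v" using child_leaves_disjoint[OF i j ij] u v by auto
  moreover have "\<not> (l < length ts \<and> {u,v} \<in> compose (ts ! l))" for l
    using compose_subset_leaves[of "{u,v}" "ts ! l"] child_leaves_disjoint[of i l]
      child_leaves_disjoint[of j l] i j ij u v by auto
  moreover have "({a,b} \<in> E \<and> a < length ts \<and> b < length ts \<and>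
      u \<in> set (leaves (ts ! a)) \<and> v \<in> set (leaves (ts ! b))) \<longleftrightarrow> (a = i \<and> b = j \<and> {i,j} \<in> E)" for a b
    using child_leaves_disjoint[of a i] child_leaves_disjoint[of b j] i j u v by auto
  ultimately show ?thesis unfolding adj_compose_Node_iff using ij by (auto simp: adj_def)
qed

lemma deg_compose_Node:
  assumes i: "i < length ts" and u: "u \<in> set (leaves (ts ! i))"
  shows "deg (set (leaves (Node E ts))) (compose (Node E ts)) u =
    deg (set (leaves (ts ! i))) (compose (ts ! i)) u + Nblock E ts i"
proof -
  let ?J = "{s. s < length ts \<and> adj E s i}"
  let ?inner = "{v \<in> set (leaves (ts ! i)). adj (compose (ts ! i)) u v}"
  have "{v \<in> set (leaves (Node E ts)). adj (compose (Node E ts)) u v} =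
      ?inner \<union> (\<Union>j\<in>?J. set (leaves (ts ! j)))"
  proof (intro equalityI subsetI)
    fix v assume "v \<in> {v \<in> set (leaves (Node E ts)). adj (compose (Node E ts)) u v}"
    then obtain j where j: "j < length ts" "v \<in> set (leaves (ts ! j))"
      and a: "adj (compose (Node E ts)) u v"
      unfolding set_leaves_Node by auto
    then show "v \<in> ?inner \<union> (\<Union>j\<in>?J. set (leaves (ts ! j)))"
      using adj_compose_within[OF i u] adj_compose_across[OF i j(1) _ u j(2)] adj_commute[of E]
      by (cases "j = i") auto
  next
    fix v assume v: "v \<in> ?inner \<union> (\<Union>j\<in>?J. set (leaves (ts ! j)))"
    show "v \<in> {v \<in> set (leaves (Node E ts)). adj (compose (Node E ts)) u v}"
    proof (cases "v \<in> set (leaves (ts ! i))")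
      case True
      then have "v \<in> ?inner" using v child_leaves_disjoint[of i] i by (auto simp: adj_def)
      then show ?thesis using adj_compose_within[OF i u True] i unfolding set_leaves_Node by auto
    next
      case False
      then obtain j where j: "j < length ts" "adj E j i" "v \<in> set (leaves (ts ! j))" using v by auto
      then have "j \<noteq> i" by (auto simp: adj_def)
      then show ?thesis
        using adj_compose_across[OF i j(1) _ u j(3)] j adj_commute[of E] unfolding set_leaves_Node by auto
    qed
  qed
  moreover have "?inner \<inter> (\<Union>j\<in>?J. set (leaves (ts ! j))) = {}"
    using child_leaves_disjoint[of i] i by (auto simp: adj_def)
  moreover have "card (\<Union>j\<in>?J. set (leaves (ts ! j))) = Nblock E ts i"
  proof -
    have "card (\<Union>j\<in>?J. set (leaves (ts ! j))) = (\<Sum>j\<in>?J. card (set (leaves (ts ! j))))"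
      by (rule card_UN_disjoint) (use child_leaves_disjoint in auto)
    also have "\<dots> = Nblock E ts i"
      unfolding Nblock_def by (rule sum.cong) (auto simp: distinct_card distinct_child_leaves)
    finally show ?thesis .
  qed
  ultimately show ?thesis unfolding deg_def by (simp add: card_Un_disjoint)
qed

lemma sum_list_sizes: "sum_list sizes = length (leaves (Node E ts))"
  by (simp add: length_concat o_def)

lemma sizes_pos: "i < length ts \<Longrightarrow> 1 \<le> sizes ! i"
  using wf leaves_not_Nil[of "ts ! i"] by (auto simp: Suc_le_eq)

lemma leaves_Node_block:
  assumes i: "i < length ts" and x: "x \<in> block sizes i"
  shows "x < length (leaves (Node E ts))"
    and "leaves (Node E ts) ! x = leaves (ts ! i) ! (x - block_start sizes i)"
    and "leaves (Node E ts) ! x \<in> set (leaves (ts ! i))"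
proof -
  have a: "x - block_start sizes i < length (leaves (ts ! i))" using x i by (auto simp: block_def)
  have "block_start sizes i \<le> x" using x by (simp add: block_def)
  then show nth: "leaves (Node E ts) ! x = leaves (ts ! i) ! (x - block_start sizes i)"
    using nth_concat_block_start[of i "map leaves ts" "x - block_start sizes i"] a i by (simp add: o_def)
  show "x < length (leaves (Node E ts))" using block_less_sum_list[of i sizes x] i x sum_list_sizes by simp
  show "leaves (Node E ts) ! x \<in> set (leaves (ts ! i))" unfolding nth using a by simp
qed

lemma Utree_Node_across:
  assumes i: "i < length ts" and j: "j < length ts" and ij: "i \<noteq> j"
    and x: "x \<in> block sizes i" and y: "y \<in> block sizes j"
  shows "Utree \<alpha> \<beta> \<gamma> \<delta> (Node E ts) $$ (x,y) = \<alpha> * (if adj E i j then 1 else 0) + \<gamma>"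
proof -
  have "x \<noteq> y" using block_disjoint[of i j sizes] block_disjoint[of j i sizes] i j ij x y
    by (cases "i < j") auto
  then show ?thesis
    using leaves_Node_block[OF i x] leaves_Node_block[OF j y]
      adj_compose_across[OF i j ij, of "leaves (Node E ts) ! x" "leaves (Node E ts) ! y"]
    by (simp add: Utree_def)
qed

lemma principal_block_Utree_Node:
  assumes i: "i < length ts"
  shows "principal_block (Utree \<alpha> \<beta> \<gamma> \<delta> (Node E ts)) (block_start sizes i) (sizes ! i) =
    Utree \<alpha> \<beta> \<gamma> \<delta> (ts ! i) + (\<delta> * real (Nblock E ts i)) \<cdot>\<^sub>m 1\<^sub>m (sizes ! i)"
proof (rule eq_matI)
  fix a b assume "a < dim_row (Utree \<alpha> \<beta> \<gamma> \<delta> (ts ! i) + (\<delta> * real (Nblock E ts i)) \<cdot>\<^sub>m 1\<^sub>m (sizes ! i))"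
    "b < dim_col (Utree \<alpha> \<beta> \<gamma> \<delta> (ts ! i) + (\<delta> * real (Nblock E ts i)) \<cdot>\<^sub>m 1\<^sub>m (sizes ! i))"
  then have a: "a < sizes ! i" and b: "b < sizes ! i" using i by (auto simp: Utree_def)
  have x: "block_start sizes i + a \<in> block sizes i" and y: "block_start sizes i + b \<in> block sizes i"
    using a b by (auto simp: block_def)
  have u: "leaves (ts ! i) ! a \<in> set (leaves (ts ! i))" "leaves (ts ! i) ! b \<in> set (leaves (ts ! i))"
    using a b i by auto
  show "principal_block (Utree \<alpha> \<beta> \<gamma> \<delta> (Node E ts)) (block_start sizes i) (sizes ! i) $$ (a,b) =
      (Utree \<alpha> \<beta> \<gamma> \<delta> (ts ! i) + (\<delta> * real (Nblock E ts i)) \<cdot>\<^sub>m 1\<^sub>m (sizes ! i)) $$ (a,b)"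
    using a b i leaves_Node_block[OF i x] leaves_Node_block[OF i y] adj_compose_within[OF i u]
      deg_compose_Node[OF i u(1)]
    by (cases "a = b") (simp_all add: principal_block_def Utree_def algebra_simps)
qed (use i in \<open>auto simp: principal_block_def Utree_def\<close>)

lemma Unode_Node_carrier: "Unode \<alpha> \<beta> \<gamma> \<delta> (Node E ts) \<in> carrier_mat (length ts) (length ts)"
  by (simp add: Unode_def node_graph_def node_children_def Let_def)

end

locale regular_node = wf_node +
  assumes regular_children: "\<And>i. i < length ts \<Longrightarrow> regular (set (leaves (ts ! i))) (compose (ts ! i))"
begin

lemma principal_block_Utree_Node_row_sum:
  assumes i: "i < length ts" and a: "a < sizes ! i"
  shows "(\<Sum>b<sizes ! i. principal_block (Utree \<alpha> \<beta> \<gamma> \<delta> (Node E ts)) (block_start sizes i) (sizes ! i) $$ (a,b)) =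
    regular_row_sum \<alpha> \<beta> \<gamma> \<delta> (ts ! i) + \<delta> * real (Nblock E ts i)"
proof -
  have "(\<Sum>b<sizes ! i. principal_block (Utree \<alpha> \<beta> \<gamma> \<delta> (Node E ts)) (block_start sizes i) (sizes ! i) $$ (a,b)) =
      (\<Sum>b<sizes ! i. Utree \<alpha> \<beta> \<gamma> \<delta> (ts ! i) $$ (a,b) + (if a = b then \<delta> * real (Nblock E ts i) else 0))"
    unfolding principal_block_Utree_Node[OF i] by (rule sum.cong) (use a i in \<open>auto simp: Utree_def\<close>)
  also have "\<dots> = (\<Sum>b<length (leaves (ts ! i)). Utree \<alpha> \<beta> \<gamma> \<delta> (ts ! i) $$ (a,b)) + \<delta> * real (Nblock E ts i)"
    using a i by (simp add: sum.distrib)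
  also have "(\<Sum>b<length (leaves (ts ! i)). Utree \<alpha> \<beta> \<gamma> \<delta> (ts ! i) $$ (a,b)) = regular_row_sum \<alpha> \<beta> \<gamma> \<delta> (ts ! i)"
    using Utree_row_sum_regular[OF distinct_child_leaves[OF i] regular_children[OF i]] a i by simp
  finally show ?thesis .
qed

lemma Utree_Node_block_row_sum:
  assumes i: "i < length ts" and x: "x \<in> block sizes i"
  shows "(\<Sum>y\<in>block sizes i. Utree \<alpha> \<beta> \<gamma> \<delta> (Node E ts) $$ (x,y)) =
    regular_row_sum \<alpha> \<beta> \<gamma> \<delta> (ts ! i) + \<delta> * real (Nblock E ts i)"
proof -
  have x': "x = block_start sizes i + (x - block_start sizes i)" "x - block_start sizes i < sizes ! i"
    using x by (auto simp: block_def)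
  have "(\<Sum>y\<in>block sizes i. Utree \<alpha> \<beta> \<gamma> \<delta> (Node E ts) $$ (x,y)) = (\<Sum>b<sizes ! i.
      principal_block (Utree \<alpha> \<beta> \<gamma> \<delta> (Node E ts)) (block_start sizes i) (sizes ! i) $$ (x - block_start sizes i, b))"
    unfolding sum_block by (rule sum.cong) (use x' in \<open>auto simp: principal_block_def\<close>)
  also have "\<dots> = regular_row_sum \<alpha> \<beta> \<gamma> \<delta> (ts ! i) + \<delta> * real (Nblock E ts i)"
    by (rule principal_block_Utree_Node_row_sum[OF i x'(2)])
  finally show ?thesis .
qed

lemma char_poly_Utree_Node:
  "char_poly (Utree \<alpha> \<beta> \<gamma> \<delta> (Node E ts)) = char_poly (quotient_mat (Utree \<alpha> \<beta> \<gamma> \<delta> (Node E ts)) sizes) *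
    (\<Prod>i<length ts. char_poly (reduced_block (Utree \<alpha> \<beta> \<gamma> \<delta> (Node E ts)) (block_start sizes i) (sizes ! i)))"
proof -
  let ?M = "Utree \<alpha> \<beta> \<gamma> \<delta> (Node E ts)"
  have start: "block_start sizes i \<in> block sizes i" if "i < length ts" for i
    using sizes_pos[OF that] by (intro block_start_in_block) simp
  have "char_poly ?M = char_poly (quotient_mat ?M sizes) *
      (\<Prod>i<length sizes. char_poly (reduced_block ?M (block_start sizes i) (sizes ! i)))"
  proof (rule char_poly_block_partition)
    show "?M \<in> carrier_mat (sum_list sizes) (sum_list sizes)"
      unfolding sum_list_sizes by (rule Utree_carrier)
    show "\<And>i. i < length sizes \<Longrightarrow> 1 \<le> sizes ! i" using sizes_pos by simp
  next
    fix i x y assume i: "i < length sizes" and x: "x \<in> block sizes i"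
      and y: "y < sum_list sizes" "y \<notin> block sizes i"
    obtain j where j: "j < length sizes" "y \<in> block sizes j" using ex_block[OF y(1)] by blast
    with y have "j \<noteq> i" by auto
    then show "?M $$ (x,y) = ?M $$ (block_start sizes i, y)"
      using Utree_Node_across[of i j] i j x start[of i] by simp
  next
    fix i x assume "i < length sizes" "x \<in> block sizes i"
    then show "(\<Sum>y\<in>block sizes i. ?M $$ (x,y)) = (\<Sum>y\<in>block sizes i. ?M $$ (block_start sizes i, y))"
      using Utree_Node_block_row_sum start by simp
  qed
  then show ?thesis by simp
qed

lemma quotient_mat_Utree_Node_index:
  assumes i: "i < length ts" and j: "j < length ts"
  shows "quotient_mat (Utree \<alpha> \<beta> \<gamma> \<delta> (Node E ts)) sizes $$ (i,j) =
    (if i = j then regular_row_sum \<alpha> \<beta> \<gamma> \<delta> (ts ! i) + \<delta> * real (Nblock E ts i)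
     else real (sizes ! j) * (\<alpha> * (if adj E i j then 1 else 0) + \<gamma>))"
proof -
  have start: "block_start sizes i \<in> block sizes i"
    using sizes_pos[OF i] by (intro block_start_in_block) simp
  show ?thesis
  proof (cases "i = j")
    case True
    then show ?thesis using i Utree_Node_block_row_sum[OF i start] by (simp add: quotient_mat_def)
  next
    case False
    have "(\<Sum>y\<in>block sizes j. Utree \<alpha> \<beta> \<gamma> \<delta> (Node E ts) $$ (block_start sizes i, y)) =
        (\<Sum>y\<in>block sizes j. \<alpha> * (if adj E i j then 1 else 0) + \<gamma>)"
      by (rule sum.cong) (simp_all add: Utree_Node_across[OF i j False start])
    then show ?thesis using False i j by (simp add: quotient_mat_def block_def)
  qed
qed

text \<open>Conjugating the quotient matrix by \<open>diag (sqrt n\<^sub>i)\<close> symmetrizes it into \<open>U(a\<^sub>v, g\<^sub>v)\<close>.\<close>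
lemma similar_Unode_quotient_mat:
  "similar_mat (Unode \<alpha> \<beta> \<gamma> \<delta> (Node E ts)) (quotient_mat (Utree \<alpha> \<beta> \<gamma> \<delta> (Node E ts)) sizes)"
proof (rule similar_mat_diagonal_scaling[OF _ Unode_Node_carrier])
  let ?n = "\<lambda>i. real (sizes ! i)"
  show "quotient_mat (Utree \<alpha> \<beta> \<gamma> \<delta> (Node E ts)) sizes \<in> carrier_mat (length ts) (length ts)"
    by (simp add: quotient_mat_def)
  show "\<And>i. i < length ts \<Longrightarrow> sqrt (?n i) \<noteq> 0" using sizes_pos by fastforce
  fix i j assume i: "i < length ts" and j: "j < length ts"
  have "Unode \<alpha> \<beta> \<gamma> \<delta> (Node E ts) $$ (i,j) = sqrt (?n i * ?n j) *
      (\<alpha> * (if adj E i j then 1 else 0) + \<gamma> * (if i = j then 0 else 1))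
      + (if i = j then regular_row_sum \<alpha> \<beta> \<gamma> \<delta> (ts ! i) + \<delta> * real (Nblock E ts i) else 0)"
    using i j by (simp add: Unode_def node_graph_def node_children_def Let_def regular_row_sum_def algebra_simps)
  moreover have "sqrt (?n j) * sqrt (?n j) = ?n j" by simp
  moreover have "sqrt (?n j) \<noteq> 0" using sizes_pos[OF j] by simp
  ultimately show "Unode \<alpha> \<beta> \<gamma> \<delta> (Node E ts) $$ (i,j) =
      sqrt (?n i) * quotient_mat (Utree \<alpha> \<beta> \<gamma> \<delta> (Node E ts)) sizes $$ (i,j) / sqrt (?n j)"
    unfolding quotient_mat_Utree_Node_index[OF i j] by (auto simp: adj_def real_sqrt_mult field_simps)
qed

lemma spec_Utree_Node:
  "spec (Utree \<alpha> \<beta> \<gamma> \<delta> (Node E ts)) = spec (Unode \<alpha> \<beta> \<gamma> \<delta> (Node E ts)) +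
    (\<Sum>i<length ts. spec (reduced_block (Utree \<alpha> \<beta> \<gamma> \<delta> (Node E ts)) (block_start sizes i) (sizes ! i)))"
proof -
  have "spec (quotient_mat (Utree \<alpha> \<beta> \<gamma> \<delta> (Node E ts)) sizes) = spec (Unode \<alpha> \<beta> \<gamma> \<delta> (Node E ts))"
    by (rule similar_mat_spec[OF Unode_Node_carrier _ similar_Unode_quotient_mat, symmetric])
      (simp add: quotient_mat_def)
  moreover have "spec (Utree \<alpha> \<beta> \<gamma> \<delta> (Node E ts)) = spec (quotient_mat (Utree \<alpha> \<beta> \<gamma> \<delta> (Node E ts)) sizes) +
    (\<Sum>i<length ts. spec (reduced_block (Utree \<alpha> \<beta> \<gamma> \<delta> (Node E ts)) (block_start sizes i) (sizes ! i)))"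
    by (rule spec_char_poly_mult_prod[OF Utree_carrier _ reduced_block_carrier _ char_poly_Utree_Node])
      (auto simp: quotient_mat_def)
  ultimately show ?thesis by simp
qed

lemma spec_principal_block_Utree_Node:
  assumes i: "i < length ts"
  shows "spec (principal_block (Utree \<alpha> \<beta> \<gamma> \<delta> (Node E ts)) (block_start sizes i) (sizes ! i)) =
    add_mset (complex_of_real (regular_row_sum \<alpha> \<beta> \<gamma> \<delta> (ts ! i) + \<delta> * real (Nblock E ts i)))
      (spec (reduced_block (Utree \<alpha> \<beta> \<gamma> \<delta> (Node E ts)) (block_start sizes i) (sizes ! i)))"
proof -
  let ?B = "principal_block (Utree \<alpha> \<beta> \<gamma> \<delta> (Node E ts)) (block_start sizes i) (sizes ! i)"
  have B: "?B \<in> carrier_mat (sizes ! i) (sizes ! i)" by (simp add: principal_block_def)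
  have "char_poly ?B = [:- (regular_row_sum \<alpha> \<beta> \<gamma> \<delta> (ts ! i) + \<delta> * real (Nblock E ts i)), 1:] *
      char_poly (reduced_block ?B 0 (sizes ! i))"
    by (rule char_poly_const_row_sum[OF B sizes_pos[OF i] principal_block_Utree_Node_row_sum[OF i]])
  from spec_char_poly_linear_factor[OF B reduced_block_carrier this] show ?thesis by simp
qed

lemma regular_row_sum_in_spec_Unode:
  assumes "regular (set (leaves (Node E ts))) (compose (Node E ts))"
  shows "complex_of_real (regular_row_sum \<alpha> \<beta> \<gamma> \<delta> (Node E ts)) \<in># spec (Unode \<alpha> \<beta> \<gamma> \<delta> (Node E ts))"
proof (rule root_char_poly_in_spec[OF Unode_Node_carrier])
  have "poly (char_poly (quotient_mat (Utree \<alpha> \<beta> \<gamma> \<delta> (Node E ts)) sizes)) (regular_row_sum \<alpha> \<beta> \<gamma> \<delta> (Node E ts)) = 0"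
  proof (rule quotient_mat_const_row_sum_root)
    show "0 < length sizes" using wf by auto
    show "\<And>i. i < length sizes \<Longrightarrow> 1 \<le> sizes ! i" using sizes_pos by simp
    fix x assume "x < sum_list sizes"
    then show "(\<Sum>y<sum_list sizes. Utree \<alpha> \<beta> \<gamma> \<delta> (Node E ts) $$ (x,y)) = regular_row_sum \<alpha> \<beta> \<gamma> \<delta> (Node E ts)"
      unfolding sum_list_sizes by (rule Utree_row_sum_regular[OF distinct_leaves assms])
  qed
  then show "poly (char_poly (Unode \<alpha> \<beta> \<gamma> \<delta> (Node E ts))) (regular_row_sum \<alpha> \<beta> \<gamma> \<delta> (Node E ts)) = 0"
    using char_poly_similar[OF similar_Unode_quotient_mat] by simp
qed

end

section \<open>The spectrum of U along the tree\<close>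

lemma internal_vertices_Leaf: "internal_vertices (Leaf x) = {}"
proof -
  have "\<not> is_internal s" if "subtree (Leaf x) p = Some s" for p s
    using that by (cases p) (auto simp: is_internal_def)
  then show ?thesis unfolding internal_vertices_def by auto
qed

lemma internal_vertices_Node:
  "internal_vertices (Node E ts) = insert [] (\<Union>i<length ts. (#) i ` internal_vertices (ts ! i))"
proof -
  have "p \<in> internal_vertices (Node E ts) \<longleftrightarrow> p \<in> insert [] (\<Union>i<length ts. (#) i ` internal_vertices (ts ! i))" for p
    by (cases p) (auto simp: internal_vertices_def is_internal_def)
  then show ?thesis by blast
qed

lemma finite_internal_vertices: "finite (internal_vertices t)"
  by (induction t) (simp_all add: internal_vertices_Leaf internal_vertices_Node)

lemma sum_internal_vertices_Node:
  "(\<Sum>w\<in>internal_vertices (Node E ts) - {[]}. f w) = (\<Sum>i<length ts. \<Sum>w\<in>internal_vertices (ts ! i). f (i # w))"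
proof -
  have "internal_vertices (Node E ts) - {[]} = (\<Union>i<length ts. (#) i ` internal_vertices (ts ! i))"
    unfolding internal_vertices_Node by auto
  then have "(\<Sum>w\<in>internal_vertices (Node E ts) - {[]}. f w) =
      (\<Sum>i<length ts. \<Sum>w\<in>(#) i ` internal_vertices (ts ! i). f w)"
    by (simp only:) (rule sum.UNION_disjoint, auto simp: finite_internal_vertices)
  also have "\<dots> = (\<Sum>i<length ts. \<Sum>w\<in>internal_vertices (ts ! i). f (i # w))"
    by (simp add: sum.reindex)
  finally show ?thesis .
qed

lemma Npath_Cons:
  assumes "i < length ts"
  shows "Npath (Node E ts) (i # w) = Nblock E ts i + Npath (ts ! i) w"
proof -
  have "Npath (Node E ts) (i # w) = (\<Sum>j<Suc (length w).
      let u = the (subtree (Node E ts) (take j (i # w))) in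
      Nblock (node_graph u) (node_children u) ((i # w) ! j))"
    unfolding Npath_def by simp
  also have "\<dots> = Nblock E ts i + (\<Sum>j<length w.
      let u = the (subtree (Node E ts) (take (Suc j) (i # w))) in
      Nblock (node_graph u) (node_children u) ((i # w) ! Suc j))"
    unfolding sum.lessThan_Suc_shift by (simp add: node_graph_def node_children_def)
  also have "(\<Sum>j<length w.
      let u = the (subtree (Node E ts) (take (Suc j) (i # w))) in
      Nblock (node_graph u) (node_children u) ((i # w) ! Suc j)) = Npath (ts ! i) w"
    unfolding Npath_def using assms by simp
  finally show ?thesis .
qed

definition shifted_node_spectrum :: "real \<Rightarrow> real \<Rightarrow> real \<Rightarrow> real \<Rightarrow> stree \<Rightarrow> nat list \<Rightarrow> complex multiset" where
  "shifted_node_spectrum \<alpha> \<beta> \<gamma> \<delta> T w =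
     mu_shift (complex_of_real (regular_row_sum \<alpha> \<beta> \<gamma> \<delta> (the (subtree T w))))
       (complex_of_real (\<delta> * real (Npath T w))) (spec (Unode \<alpha> \<beta> \<gamma> \<delta> (the (subtree T w))))"

lemma image_mset_sum: "image_mset f (sum g A) = (\<Sum>x\<in>A. image_mset f (g x))"
  using sum_comp_morphism[of "image_mset f" g A] by (simp add: o_def)

lemma shifted_node_spectrum_Cons:
  assumes "i < length ts"
  shows "shifted_node_spectrum \<alpha> \<beta> \<gamma> \<delta> (Node E ts) (i # w) =
    image_mset (\<lambda>x. x + complex_of_real (\<delta> * real (Nblock E ts i))) (shifted_node_spectrum \<alpha> \<beta> \<gamma> \<delta> (ts ! i) w)"
  using assms unfolding shifted_node_spectrum_def mu_shift_def Npath_Cons[OF assms]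
  by (simp add: multiset.map_comp o_def algebra_simps)

definition regular_subtrees :: "stree \<Rightarrow> bool" where
  "regular_subtrees t \<longleftrightarrow> (\<forall>w\<in>internal_vertices t - {[]}.
     regular (set (leaves (the (subtree t w)))) (compose (the (subtree t w))))"

lemma regular_subtrees_NodeD:
  assumes "regular_subtrees (Node E ts)" and i: "i < length ts"
  shows "regular (set (leaves (ts ! i))) (compose (ts ! i))" and "regular_subtrees (ts ! i)"
proof -
  have below: "regular (set (leaves (the (subtree (ts ! i) w)))) (compose (the (subtree (ts ! i) w)))"
    if "w \<in> internal_vertices (ts ! i)" for w
  proof -
    have "i # w \<in> internal_vertices (Node E ts) - {[]}"
      using that i unfolding internal_vertices_Node by auto
    then have "regular (set (leaves (the (subtree (Node E ts) (i # w)))))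
        (compose (the (subtree (Node E ts) (i # w))))"
      using assms(1) unfolding regular_subtrees_def by blast
    then show ?thesis using i by simp
  qed
  then show "regular_subtrees (ts ! i)" unfolding regular_subtrees_def by blast
  show "regular (set (leaves (ts ! i))) (compose (ts ! i))"
  proof (cases "ts ! i")
    case (Leaf x)
    then show ?thesis using regular_Leaf by simp
  next
    case (Node E' ts')
    then show ?thesis using below[of "[]"] by (simp add: internal_vertices_Node)
  qed
qed

text \<open>The eigenvalue removed by \<open>\<mu>\<close> is the row sum of the child's block, which the reduction
  splits off.\<close>
lemma (in regular_node) spec_reduced_block_child:
  assumes i: "i < length ts" and sub: "regular_subtrees (ts ! i)"
    and IH: "is_internal (ts ! i) \<Longrightarrow> spec (Utree \<alpha> \<beta> \<gamma> \<delta> (ts ! i)) =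
      (\<Sum>w\<in>internal_vertices (ts ! i) - {[]}. shifted_node_spectrum \<alpha> \<beta> \<gamma> \<delta> (ts ! i) w)
        + spec (Unode \<alpha> \<beta> \<gamma> \<delta> (ts ! i))"
  shows "spec (reduced_block (Utree \<alpha> \<beta> \<gamma> \<delta> (Node E ts)) (block_start sizes i) (sizes ! i)) =
    (\<Sum>w\<in>internal_vertices (ts ! i). shifted_node_spectrum \<alpha> \<beta> \<gamma> \<delta> (Node E ts) (i # w))"
proof (cases "ts ! i")
  case (Leaf x)
  then have "reduced_block (Utree \<alpha> \<beta> \<gamma> \<delta> (Node E ts)) (block_start sizes i) (sizes ! i) \<in> carrier_mat 0 0"
    using i reduced_block_carrier[of _ _ "sizes ! i"] by simp
  then show ?thesis using Leaf by (simp add: spec_empty internal_vertices_Leaf)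
next
  case (Node E' ts')
  let ?c = "ts ! i"
  let ?shift = "image_mset (\<lambda>x. x + complex_of_real (\<delta> * real (Nblock E ts i)))"
  have "wf_stree ?c" using wf i by simp
  interpret child: regular_node E' ts'
    using \<open>wf_stree ?c\<close> distinct_child_leaves[OF i] regular_subtrees_NodeD(1)[OF sub[unfolded Node]] Node
    by unfold_locales auto
  define X where "X = (\<Sum>w\<in>internal_vertices ?c - {[]}. shifted_node_spectrum \<alpha> \<beta> \<gamma> \<delta> ?c w)"
  define Y where "Y = spec (Unode \<alpha> \<beta> \<gamma> \<delta> ?c)"
  define q where "q = complex_of_real (regular_row_sum \<alpha> \<beta> \<gamma> \<delta> ?c)"
  have "q \<in># Y"
    using child.regular_row_sum_in_spec_Unode regular_children[OF i] Node by (simp add: q_def Y_def)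
  let ?p = "complex_of_real (regular_row_sum \<alpha> \<beta> \<gamma> \<delta> ?c + \<delta> * real (Nblock E ts i))"
  have "add_mset ?p (spec (reduced_block (Utree \<alpha> \<beta> \<gamma> \<delta> (Node E ts)) (block_start sizes i) (sizes ! i))) =
      spec (principal_block (Utree \<alpha> \<beta> \<gamma> \<delta> (Node E ts)) (block_start sizes i) (sizes ! i))"
    by (rule spec_principal_block_Utree_Node[OF i, symmetric])
  also have "\<dots> = ?shift (spec (Utree \<alpha> \<beta> \<gamma> \<delta> ?c))"
    unfolding principal_block_Utree_Node[OF i] using i by (simp add: spec_add_scalar_one[OF Utree_carrier])
  also have "\<dots> = ?shift X + ?shift (add_mset q (Y - {#q#}))"
    using IH Node \<open>q \<in># Y\<close> by (simp add: X_def Y_def is_internal_def)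
  also have "\<dots> = add_mset ?p (?shift X + ?shift (Y - {#q#}))"
    by (simp add: q_def)
  finally have "spec (reduced_block (Utree \<alpha> \<beta> \<gamma> \<delta> (Node E ts)) (block_start sizes i) (sizes ! i)) =
      ?shift X + ?shift (Y - {#q#})"
    by simp
  moreover have "?shift X = (\<Sum>w\<in>internal_vertices ?c - {[]}. shifted_node_spectrum \<alpha> \<beta> \<gamma> \<delta> (Node E ts) (i # w))"
    unfolding X_def image_mset_sum shifted_node_spectrum_Cons[OF i] ..
  moreover have "?shift (Y - {#q#}) = shifted_node_spectrum \<alpha> \<beta> \<gamma> \<delta> (Node E ts) [i]"
    unfolding shifted_node_spectrum_def mu_shift_def Npath_Cons[OF i] using i
    by (simp add: Y_def q_def Npath_def)
  moreover have "[] \<in> internal_vertices ?c" using Node by (simp add: internal_vertices_Node)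
  ultimately show ?thesis by (simp add: sum.remove[OF finite_internal_vertices])
qed

theorem spec_Utree:
  assumes "wf_stree t" "distinct (leaves t)" "is_internal t" "regular_subtrees t"
  shows "spec (Utree \<alpha> \<beta> \<gamma> \<delta> t) =
    (\<Sum>w\<in>internal_vertices t - {[]}. shifted_node_spectrum \<alpha> \<beta> \<gamma> \<delta> t w) + spec (Unode \<alpha> \<beta> \<gamma> \<delta> t)"
  using assms
proof (induction t)
  case (Leaf x)
  then show ?case by (simp add: is_internal_def)
next
  case (Node E ts)
  interpret regular_node E ts
    using Node.prems regular_subtrees_NodeD(1) by unfold_locales auto
  have "spec (reduced_block (Utree \<alpha> \<beta> \<gamma> \<delta> (Node E ts)) (block_start sizes i) (sizes ! i)) =
      (\<Sum>w\<in>internal_vertices (ts ! i). shifted_node_spectrum \<alpha> \<beta> \<gamma> \<delta> (Node E ts) (i # w))"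
    if i: "i < length ts" for i
    using Node.IH[OF nth_mem[OF i]] wf i distinct_child_leaves[OF i] regular_subtrees_NodeD(2)[OF Node.prems(4) i]
    by (intro spec_reduced_block_child) auto
  then show ?case unfolding spec_Utree_Node sum_internal_vertices_Node by (simp add: add.commute)
qed

theorem mainTheorem13:
  fixes \<alpha> \<beta> \<gamma> \<delta> :: real and T :: stree and n :: nat
  assumes "\<alpha> \<noteq> 0"
    and "wf_stree T"
    and "leaves T = [0..<n]"
    and "2 \<le> n"
    and "\<forall>w\<in>internal_vertices T - {[]}.
           regular (set (leaves (the (subtree T w)))) (compose (the (subtree T w))) \<and>
           (\<alpha> * \<gamma> > 0 \<or>
            (\<gamma> = 0 \<and> connected_graph (set (leaves (the (subtree T w)))) (compose (the (subtree T w)))))"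
  shows "spec (Umat \<alpha> \<beta> \<gamma> \<delta> n (compose T)) =
    (\<Sum>w\<in>internal_vertices T - {[]}.
        let t = the (subtree T w);
            q = (\<alpha> + \<delta>) * real (reg (set (leaves t)) (compose t)) + \<beta> + \<gamma> * real (length (leaves t))
        in mu_shift (complex_of_real q) (complex_of_real (\<delta> * real (Npath T w)))
             (spec (Unode \<alpha> \<beta> \<gamma> \<delta> t)))
    + spec (Unode \<alpha> \<beta> \<gamma> \<delta> T)"
proof -
  have "distinct (leaves T)" using assms(3) by simp
  moreover have "is_internal T"
    using assms(3,4) by (cases T) (auto simp: is_internal_def dest!: arg_cong[of _ _ length])
  moreover have "regular_subtrees T" using assms(5) by (simp add: regular_subtrees_def)
  ultimately have "spec (Utree \<alpha> \<beta> \<gamma> \<delta> T) =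
      (\<Sum>w\<in>internal_vertices T - {[]}. shifted_node_spectrum \<alpha> \<beta> \<gamma> \<delta> T w) + spec (Unode \<alpha> \<beta> \<gamma> \<delta> T)"
    by (rule spec_Utree[OF assms(2)])
  then show ?thesis
    unfolding Umat_eq_Utree[OF assms(3)] by (simp add: shifted_node_spectrum_def regular_row_sum_def Let_def)
qed

end
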